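(* Let $R$ be an ordered ring with unit. Fix either a finite size $n$ or the infinite index set $\{1,2,3,\dots\}$. The set of all upper triangular matrices (of that size) with entries in $R$ whose diagonal entries are all positive and invertible in $R$ forms a group under matrix multiplication, and this group is orderable, i.e. it admits a relation $>$ such that for all $X,Y,Z$ exactly one of $X>Y$, $Y>X$, $X=Y$ holds, $>$ is transitive, and $X>Y$ implies $AXB>AYB$ for all $A,B$ in the group.
   Context: An ordered ring is a ring $R$ with a relation $>$ such that the additive group is totally ordered by $>$ with $x>y \Rightarrow a+x+b>a+y+b$, and such that $a>0$ and $x>y$ imply $ax>ay$ and $xa>ya$. An upper triangular (possibly infinite) matrix is one with all entries below the main diagonal equal to $0$; for infinite matrices indexed by positive integers, products are defined entrywise by the (finite) sums $\sum_{i\le j\le k} x_{ij}y_{jk}$. *)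

theory Defs
  imports "HOL-Algebra.Group"
begin

text \<open>Ordered ring with unit: type class linordered_ring_strict (totally ordered additive
group, translation invariant, strict multiplication monotonicity on both sides) plus ring_1.
Matrices are functions nat => nat => 'a, indexed by a set I of indices, which is either
{1..n} (finite size n) or {1..} (the positive integers); entries outside I x I are 0.\<close>

definition ut_mats :: "nat set \<Rightarrow> (nat \<Rightarrow> nat \<Rightarrow> 'a::{linordered_ring_strict,ring_1}) set" where
  "ut_mats I = {X. (\<forall>i j. (i \<notin> I \<or> j \<notin> I) \<longrightarrow> X i j = 0)
                 \<and> (\<forall>i\<in>I. \<forall>j\<in>I. j < i \<longrightarrow> X i j = 0)
                 \<and> (\<forall>i\<in>I. 0 < X i i \<and> (\<exists>u. u * X i i = 1 \<and> X i i * u = 1))}"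

definition mat_mult :: "nat set \<Rightarrow> (nat \<Rightarrow> nat \<Rightarrow> 'a::{linordered_ring_strict,ring_1})
    \<Rightarrow> (nat \<Rightarrow> nat \<Rightarrow> 'a) \<Rightarrow> (nat \<Rightarrow> nat \<Rightarrow> 'a)" where
  "mat_mult I X Y = (\<lambda>i k. if i \<in> I \<and> k \<in> I
      then (\<Sum>j\<in>{j\<in>I. i \<le> j \<and> j \<le> k}. X i j * Y j k) else 0)"

definition mat_one :: "nat set \<Rightarrow> (nat \<Rightarrow> nat \<Rightarrow> 'a::{linordered_ring_strict,ring_1})" where
  "mat_one I = (\<lambda>i j. if i \<in> I \<and> j \<in> I \<and> i = j then 1 else 0)"

definition ut_group :: "nat set \<Rightarrow> (nat \<Rightarrow> nat \<Rightarrow> 'a::{linordered_ring_strict,ring_1}) monoid" where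
  "ut_group I = \<lparr>carrier = ut_mats I, mult = mat_mult I, one = mat_one I\<rparr>"

definition orderable_group :: "('g, 'b) monoid_scheme \<Rightarrow> bool" where
  "orderable_group G \<longleftrightarrow> (\<exists>gt :: 'g \<Rightarrow> 'g \<Rightarrow> bool.
     (\<forall>X\<in>carrier G. \<forall>Y\<in>carrier G.
        (gt X Y \<or> gt Y X \<or> X = Y) \<and> \<not> (gt X Y \<and> gt Y X)
        \<and> \<not> (gt X Y \<and> X = Y) \<and> \<not> (gt Y X \<and> X = Y))
   \<and> (\<forall>X\<in>carrier G. \<forall>Y\<in>carrier G. \<forall>Z\<in>carrier G. gt X Y \<and> gt Y Z \<longrightarrow> gt X Z)
   \<and> (\<forall>A\<in>carrier G. \<forall>B\<in>carrier G. \<forall>X\<in>carrier G. \<forall>Y\<in>carrier G.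
        gt X Y \<longrightarrow> gt (A \<otimes>\<^bsub>G\<^esub> X \<otimes>\<^bsub>G\<^esub> B) (A \<otimes>\<^bsub>G\<^esub> Y \<otimes>\<^bsub>G\<^esub> B)))"

end

theory Submission
  imports Defs "HOL-Library.Fun_Lexorder" "HOL-Library.Product_Lexorder"
begin

text \<open>Upper triangular matrices with positive unit diagonal are closed under products and
under back substitution, so they form a group. To order them, list the entries superdiagonal by
superdiagonal, each from top to bottom; the positions are then well-ordered, so two distinct
matrices have a first entry where they differ, and we compare them there. Multiplying on the left
by A and on the right by B keeps the entries before that position equal and multiplies the
difference at position (i, j) by A i i on the left and B j j on the right, both positive.\<close>

type_synonym 'a mat = "nat \<Rightarrow> nat \<Rightarrow> 'a"

lemma ordered_ring_zero_less_one: "(0::'a::{linordered_ring_strict,ring_1}) < 1"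
proof -
  have "(0::'a) \<le> 1 * 1" by (rule zero_le_square)
  then show ?thesis by (simp add: order_le_neq_trans)
qed

lemma ut_mats_outside: "X \<in> ut_mats I \<Longrightarrow> i \<notin> I \<or> j \<notin> I \<Longrightarrow> X i j = 0"
  by (auto simp: ut_mats_def)

lemma ut_mats_below_diag: "X \<in> ut_mats I \<Longrightarrow> j < i \<Longrightarrow> X i j = 0"
  by (cases "i \<in> I \<and> j \<in> I") (auto simp: ut_mats_def)

lemma ut_mats_diag_pos: "X \<in> ut_mats I \<Longrightarrow> i \<in> I \<Longrightarrow> 0 < X i i"
  by (auto simp: ut_mats_def)

lemma ut_mats_diag_unit: "X \<in> ut_mats I \<Longrightarrow> i \<in> I \<Longrightarrow> \<exists>u. u * X i i = 1 \<and> X i i * u = 1"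
  by (auto simp: ut_mats_def)

lemma ut_mats_nonzero: "X \<in> ut_mats I \<Longrightarrow> X i j \<noteq> 0 \<Longrightarrow> i \<in> I \<and> j \<in> I \<and> i \<le> j"
  by (metis not_le ut_mats_outside ut_mats_below_diag)

lemma mat_mult_ut:
  fixes X Y :: "'a::{linordered_ring_strict,ring_1} mat"
  assumes X: "X \<in> ut_mats I" and Y: "Y \<in> ut_mats I"
  shows "mat_mult I X Y i k = (\<Sum>j\<le>k. X i j * Y j k)"
proof (cases "i \<in> I \<and> k \<in> I")
  case True
  have "(\<Sum>j\<in>{j\<in>I. i \<le> j \<and> j \<le> k}. X i j * Y j k) = (\<Sum>j\<le>k. X i j * Y j k)"
    by (rule sum.mono_neutral_left) (use ut_mats_nonzero[OF X, of i] in force)+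
  then show ?thesis using True by (simp add: mat_mult_def)
next
  case False
  then have "X i j * Y j k = 0" for j
    using X Y ut_mats_outside by (metis mult_zero_left mult_zero_right)
  then have "(\<Sum>j\<le>k. X i j * Y j k) = 0" by (simp add: sum.neutral)
  then show ?thesis unfolding mat_mult_def using False by auto
qed

lemma mat_mult_closed:
  fixes X Y :: "'a::{linordered_ring_strict,ring_1} mat"
  assumes X: "X \<in> ut_mats I" and Y: "Y \<in> ut_mats I"
  shows "mat_mult I X Y \<in> ut_mats I"
  unfolding ut_mats_def
proof (intro CollectI conjI ballI allI impI)
  fix i j assume "i \<in> I" "j \<in> I" "j < i"
  then have empty: "{l\<in>I. i \<le> l \<and> l \<le> j} = {}" by auto
  show "mat_mult I X Y i j = 0" unfolding mat_mult_def empty by simp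
next
  fix i assume i: "i \<in> I"
  then have "{j\<in>I. i \<le> j \<and> j \<le> i} = {i}" by auto
  then have diag: "mat_mult I X Y i i = X i i * Y i i" using i by (simp add: mat_mult_def)
  show "0 < mat_mult I X Y i i"
    using diag ut_mats_diag_pos[OF X i] ut_mats_diag_pos[OF Y i] by (simp add: mult_pos_pos)
  obtain u where u: "u * X i i = 1" "X i i * u = 1" using ut_mats_diag_unit[OF X i] by blast
  obtain v where v: "v * Y i i = 1" "Y i i * v = 1" using ut_mats_diag_unit[OF Y i] by blast
  have "(v * u) * (X i i * Y i i) = 1" "(X i i * Y i i) * (v * u) = 1"
    by (metis mult.assoc mult_1_left u v)+
  then show "\<exists>w. w * mat_mult I X Y i i = 1 \<and> mat_mult I X Y i i * w = 1"
    using diag by metis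
qed (auto simp: mat_mult_def)

lemma mat_one_closed: "(mat_one I :: 'a::{linordered_ring_strict,ring_1} mat) \<in> ut_mats I"
  by (auto simp: ut_mats_def mat_one_def ordered_ring_zero_less_one)

lemma mat_mult_one_left:
  fixes X :: "'a::{linordered_ring_strict,ring_1} mat"
  assumes X: "X \<in> ut_mats I"
  shows "mat_mult I (mat_one I) X = X"
proof (intro ext)
  fix i k
  have "(\<Sum>j\<le>k. mat_one I i j * X j k) = (\<Sum>j\<le>k. if j = i then (if i \<in> I then X i k else 0) else 0)"
    by (rule sum.cong) (auto simp: mat_one_def)
  also have "\<dots> = X i k"
    using X by (auto simp: ut_mats_outside ut_mats_below_diag not_le)
  finally show "mat_mult I (mat_one I) X i k = X i k"
    by (simp add: mat_mult_ut[OF mat_one_closed X])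
qed

lemma mat_mult_assoc:
  fixes X Y Z :: "'a::{linordered_ring_strict,ring_1} mat"
  assumes X: "X \<in> ut_mats I" and Y: "Y \<in> ut_mats I" and Z: "Z \<in> ut_mats I"
  shows "mat_mult I (mat_mult I X Y) Z = mat_mult I X (mat_mult I Y Z)"
proof (intro ext)
  fix i m
  note XY = mat_mult_closed[OF X Y] and YZ = mat_mult_closed[OF Y Z]
  have inner: "(\<Sum>l\<le>j. X i l * Y l j) = (\<Sum>l\<le>m. X i l * Y l j)" if "j \<le> m" for j
    by (rule sum.mono_neutral_left) (use that Y in \<open>auto simp: ut_mats_below_diag\<close>)
  have "(\<Sum>j\<le>m. (\<Sum>l\<le>j. X i l * Y l j) * Z j m) = (\<Sum>j\<le>m. \<Sum>l\<le>m. X i l * Y l j * Z j m)"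
    by (rule sum.cong) (auto simp: inner sum_distrib_right)
  also have "\<dots> = (\<Sum>l\<le>m. \<Sum>j\<le>m. X i l * Y l j * Z j m)" by (rule sum.swap)
  also have "\<dots> = (\<Sum>l\<le>m. X i l * (\<Sum>j\<le>m. Y l j * Z j m))"
    by (simp add: sum_distrib_left mult.assoc)
  finally show "mat_mult I (mat_mult I X Y) Z i m = mat_mult I X (mat_mult I Y Z) i m"
    unfolding mat_mult_ut[OF XY Z] mat_mult_ut[OF X YZ] mat_mult_ut[OF X Y] mat_mult_ut[OF Y Z] .
qed

section \<open>Inverses by back substitution\<close>

definition unit_inv :: "'a::ring_1 \<Rightarrow> 'a" where
  "unit_inv x = (SOME u. u * x = 1 \<and> x * u = 1)"

lemma unit_inv:
  assumes "\<exists>u. u * x = 1 \<and> x * u = 1"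
  shows "unit_inv x * x = 1" "x * unit_inv x = 1"
  using someI_ex[OF assms] unfolding unit_inv_def by auto

lemma unit_inv_pos:
  fixes x :: "'a::{linordered_ring_strict,ring_1}"
  assumes "0 < x" "\<exists>u. u * x = 1 \<and> x * u = 1"
  shows "0 < unit_inv x"
proof (rule ccontr)
  assume "\<not> 0 < unit_inv x"
  then have "unit_inv x * x \<le> 0" using assms(1) by (simp add: mult_nonpos_nonneg)
  then show False using unit_inv(1)[OF assms(2)] ordered_ring_zero_less_one[where 'a='a] by simp
qed

text \<open>Row i of the left inverse Y of X, solved column by column from (Y X) i k = 0 for i < k.\<close>

function inv_row :: "'a::{linordered_ring_strict,ring_1} mat \<Rightarrow> nat \<Rightarrow> nat \<Rightarrow> 'a" where
  "inv_row X i k = (if k \<le> i then unit_inv (X i i)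
     else - (\<Sum>j\<in>{i..<k}. inv_row X i j * X j k) * unit_inv (X k k))"
  by pat_completeness auto
termination by (relation "measure (\<lambda>(X, i, k). k)") auto

declare inv_row.simps[simp del]

definition mat_inv :: "nat set \<Rightarrow> 'a::{linordered_ring_strict,ring_1} mat \<Rightarrow> 'a mat" where
  "mat_inv I X = (\<lambda>i k. if i \<in> I \<and> k \<in> I \<and> i \<le> k then inv_row X i k else 0)"

lemma inv_row_mult_diag:
  fixes X :: "'a::{linordered_ring_strict,ring_1} mat"
  assumes "X \<in> ut_mats I" "k \<in> I" "i \<le> k"
  shows "inv_row X i k * X k k = (if i = k then 1 else - (\<Sum>j\<in>{i..<k}. inv_row X i j * X j k))"
  using unit_inv[OF ut_mats_diag_unit[OF assms(1,2)]] assms(3)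
  by (simp add: inv_row.simps[of X i k] mult.assoc)

lemma mat_inv_closed:
  fixes X :: "'a::{linordered_ring_strict,ring_1} mat"
  assumes X: "X \<in> ut_mats I"
  shows "mat_inv I X \<in> ut_mats I"
  unfolding ut_mats_def
proof (intro CollectI conjI ballI allI impI)
  fix i assume i: "i \<in> I"
  then have diag: "mat_inv I X i i = unit_inv (X i i)" by (simp add: mat_inv_def inv_row.simps)
  show "0 < mat_inv I X i i"
    using diag unit_inv_pos[OF ut_mats_diag_pos[OF X i] ut_mats_diag_unit[OF X i]] by simp
  show "\<exists>w. w * mat_inv I X i i = 1 \<and> mat_inv I X i i * w = 1"
    using diag unit_inv[OF ut_mats_diag_unit[OF X i]] by metis
qed (auto simp: mat_inv_def)

lemma mat_mult_inv_left:
  fixes X :: "'a::{linordered_ring_strict,ring_1} mat"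
  assumes X: "X \<in> ut_mats I"
  shows "mat_mult I (mat_inv I X) X = mat_one I"
proof (intro ext)
  fix i k
  let ?Y = "mat_inv I X"
  have Y: "?Y \<in> ut_mats I" using mat_inv_closed[OF X] .
  show "mat_mult I ?Y X i k = mat_one I i k"
  proof (cases "i \<in> I \<and> k \<in> I \<and> i \<le> k")
    case False
    then have "?Y i j * X j k = 0" for j
      by (metis X Y le_trans mult_zero_left mult_zero_right ut_mats_nonzero)
    then have "(\<Sum>j\<le>k. ?Y i j * X j k) = 0" by (simp add: sum.neutral)
    then show ?thesis using False by (auto simp: mat_mult_ut[OF Y X] mat_one_def)
  next
    case True
    let ?S = "\<Sum>j\<in>{i..<k}. inv_row X i j * X j k"
    have "(\<Sum>j<k. ?Y i j * X j k) = ?S"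
      by (rule sum.mono_neutral_cong_right) (use True X in \<open>auto simp: mat_inv_def ut_mats_outside\<close>)
    moreover have "?Y i k * X k k = (if i = k then 1 else - ?S)"
      using True inv_row_mult_diag[OF X] by (simp add: mat_inv_def)
    ultimately have "(\<Sum>j\<le>k. ?Y i j * X j k) = (if i = k then 1 else 0)"
      by (simp add: lessThan_Suc_atMost[symmetric])
    then show ?thesis using True by (simp add: mat_mult_ut[OF Y X] mat_one_def)
  qed
qed

lemma group_ut_group: "group (ut_group I :: 'a::{linordered_ring_strict,ring_1} mat monoid)"
proof (rule groupI)
  fix X assume "X \<in> carrier (ut_group I :: 'a mat monoid)"
  then show "\<exists>Y\<in>carrier (ut_group I). Y \<otimes>\<^bsub>ut_group I\<^esub> X = \<one>\<^bsub>ut_group I\<^esub>"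
    using mat_inv_closed mat_mult_inv_left by (fastforce simp: ut_group_def)
qed (auto simp: ut_group_def mat_mult_closed mat_one_closed mat_mult_assoc mat_mult_one_left)

section \<open>The lexicographic order along superdiagonals\<close>

lemma less_fun_trichotomy_wellorder:
  fixes f g :: "'a::wellorder \<Rightarrow> 'b::linorder"
  shows "less_fun f g \<or> f = g \<or> less_fun g f"
proof (cases "f = g")
  case False
  then have ex: "\<exists>k. f k \<noteq> g k" by auto
  define k where "k = (LEAST k. f k \<noteq> g k)"
  have "f k \<noteq> g k" unfolding k_def using ex by (rule LeastI_ex)
  moreover have "f k' = g k'" if "k' < k" for k'
    using not_less_Least[of k' "\<lambda>k. f k \<noteq> g k"] that unfolding k_def by blast
  ultimately show ?thesis by (metis less_funI neq_iff)
qed simp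

lemma less_fun_transfer:
  assumes "less_fun f g"
    and "\<And>p. (\<And>q. q < p \<Longrightarrow> f q = g q) \<Longrightarrow> f p = g p \<Longrightarrow> f' p = g' p"
    and "\<And>p. (\<And>q. q < p \<Longrightarrow> f q = g q) \<Longrightarrow> f p < g p \<Longrightarrow> f' p < g' p"
  shows "less_fun f' g'"
proof -
  obtain k where "f k < g k" and below: "\<And>k'. k' < k \<Longrightarrow> f k' = g k'"
    using assms(1) unfolding less_fun_def by blast
  have "f' k' = g' k'" if "k' < k" for k'
  proof (rule assms(2))
    show "f q = g q" if "q < k'" for q by (rule below) (rule less_trans[OF that \<open>k' < k\<close>])
  qed (rule below[OF that])
  moreover have "f' k < g' k" by (rule assms(3)[OF below \<open>f k < g k\<close>])
  ultimately show ?thesis by (intro less_funI exI[of _ k]) simp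
qed

definition by_diagonals :: "'a mat \<Rightarrow> nat \<times> nat \<Rightarrow> 'a" where
  "by_diagonals X = (\<lambda>(d, i). X i (i + d))"

definition diag_lex_less :: "'a::linorder mat \<Rightarrow> 'a mat \<Rightarrow> bool" where
  "diag_lex_less X Y \<longleftrightarrow> less_fun (by_diagonals X) (by_diagonals Y)"

lemma by_diagonals_inj_ut:
  assumes X: "X \<in> ut_mats I" and Y: "Y \<in> ut_mats I" and eq: "by_diagonals X = by_diagonals Y"
  shows "X = Y"
proof (intro ext)
  fix i j
  show "X i j = Y i j"
  proof (cases "i \<le> j")
    case True
    then show ?thesis using fun_cong[OF eq, of "(j - i, i)"] by (simp add: by_diagonals_def)
  next
    case False
    then show ?thesis by (simp add: ut_mats_below_diag[OF X] ut_mats_below_diag[OF Y])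
  qed
qed

lemma mat_mult_left_diff:
  fixes A X Y :: "'a::{linordered_ring_strict,ring_1} mat"
  assumes A: "A \<in> ut_mats I" and X: "X \<in> ut_mats I" and Y: "Y \<in> ut_mats I"
    and "a \<le> b" and agree: "\<And>l. a < l \<Longrightarrow> l \<le> b \<Longrightarrow> X l b = Y l b"
  shows "mat_mult I A X a b - mat_mult I A Y a b = A a a * (X a b - Y a b)"
proof -
  have "mat_mult I A X a b - mat_mult I A Y a b = (\<Sum>l\<le>b. A a l * (X l b - Y l b))"
    by (simp add: mat_mult_ut[OF A X] mat_mult_ut[OF A Y] sum_subtractf right_diff_distrib)
  also have "\<dots> = (\<Sum>l\<le>b. if l = a then A a a * (X a b - Y a b) else 0)"
    by (rule sum.cong) (auto simp: agree ut_mats_below_diag[OF A] neq_iff)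
  finally show ?thesis using \<open>a \<le> b\<close> by simp
qed

lemma mat_mult_right_diff:
  fixes B X Y :: "'a::{linordered_ring_strict,ring_1} mat"
  assumes B: "B \<in> ut_mats I" and X: "X \<in> ut_mats I" and Y: "Y \<in> ut_mats I"
    and agree: "\<And>l. a \<le> l \<Longrightarrow> l < b \<Longrightarrow> X a l = Y a l"
  shows "mat_mult I X B a b - mat_mult I Y B a b = (X a b - Y a b) * B b b"
proof -
  have row: "X a l = Y a l" if "l < b" for l
    using that by (cases "l < a") (auto simp: agree ut_mats_below_diag[OF X] ut_mats_below_diag[OF Y])
  have "mat_mult I X B a b - mat_mult I Y B a b = (\<Sum>l\<le>b. (X a l - Y a l) * B l b)"
    by (simp add: mat_mult_ut[OF X B] mat_mult_ut[OF Y B] sum_subtractf left_diff_distrib)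
  also have "\<dots> = (\<Sum>l\<le>b. if l = b then (X a b - Y a b) * B b b else 0)"
    by (rule sum.cong) (auto simp: row)
  finally show ?thesis by simp
qed

lemma diag_lex_less_transfer:
  fixes X Y X' Y' :: "'a::{linordered_ring_strict,ring_1} mat"
  assumes X: "X \<in> ut_mats I" and Y: "Y \<in> ut_mats I"
    and X': "X' \<in> ut_mats I" and Y': "Y' \<in> ut_mats I" and less: "diag_lex_less X Y"
    and step: "\<And>i j. i \<in> I \<Longrightarrow> j \<in> I \<Longrightarrow> i \<le> j
      \<Longrightarrow> (\<And>q. q < (j - i, i) \<Longrightarrow> by_diagonals X q = by_diagonals Y q)
      \<Longrightarrow> (X i j = Y i j \<longrightarrow> X' i j = Y' i j) \<and> (X i j < Y i j \<longrightarrow> X' i j < Y' i j)"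
  shows "diag_lex_less X' Y'"
  unfolding diag_lex_less_def
proof (rule less_fun_transfer[OF less[unfolded diag_lex_less_def]])
  fix p assume agree: "\<And>q. q < p \<Longrightarrow> by_diagonals X q = by_diagonals Y q"
  obtain d i where p: "p = (d, i)" by fastforce
  have step_p: "(X i (i + d) = Y i (i + d) \<longrightarrow> X' i (i + d) = Y' i (i + d))
      \<and> (X i (i + d) < Y i (i + d) \<longrightarrow> X' i (i + d) < Y' i (i + d))"
    if "i \<in> I" "i + d \<in> I"
    using step[of i "i + d"] that agree by (simp add: p)
  show "by_diagonals X' p = by_diagonals Y' p" if "by_diagonals X p = by_diagonals Y p"
  proof (cases "i \<in> I \<and> i + d \<in> I")
    case True
    then show ?thesis using that step_p by (simp add: p by_diagonals_def)
  qed (auto simp: p by_diagonals_def ut_mats_outside[OF X'] ut_mats_outside[OF Y'])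
  show "by_diagonals X' p < by_diagonals Y' p" if lt: "by_diagonals X p < by_diagonals Y p"
  proof -
    have "i \<in> I \<and> i + d \<in> I"
    proof (rule ccontr)
      assume "\<not> (i \<in> I \<and> i + d \<in> I)"
      then have "by_diagonals X p = by_diagonals Y p"
        by (auto simp: p by_diagonals_def ut_mats_outside[OF X] ut_mats_outside[OF Y])
      then show False using lt by simp
    qed
    then show ?thesis using lt step_p by (simp add: p by_diagonals_def)
  qed
qed

lemma diag_lex_less_mult_left:
  fixes A X Y :: "'a::{linordered_ring_strict,ring_1} mat"
  assumes A: "A \<in> ut_mats I" and X: "X \<in> ut_mats I" and Y: "Y \<in> ut_mats I"
    and less: "diag_lex_less X Y"
  shows "diag_lex_less (mat_mult I A X) (mat_mult I A Y)"
proof (rule diag_lex_less_transfer[OF X Y mat_mult_closed[OF A X] mat_mult_closed[OF A Y] less])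
  fix i j assume i: "i \<in> I" and "i \<le> j"
    and agree: "\<And>q. q < (j - i, i) \<Longrightarrow> by_diagonals X q = by_diagonals Y q"
  have "X l j = Y l j" if "i < l" "l \<le> j" for l
    using agree[of "(j - l, l)"] that by (simp add: by_diagonals_def)
  then have diff: "mat_mult I A X i j - mat_mult I A Y i j = A i i * (X i j - Y i j)"
    using mat_mult_left_diff[OF A X Y \<open>i \<le> j\<close>] by blast
  have "X i j < Y i j \<Longrightarrow> A i i * (X i j - Y i j) < 0"
    using ut_mats_diag_pos[OF A i] by (simp add: mult_pos_neg)
  then show "(X i j = Y i j \<longrightarrow> mat_mult I A X i j = mat_mult I A Y i j)
      \<and> (X i j < Y i j \<longrightarrow> mat_mult I A X i j < mat_mult I A Y i j)"
    using diff by (auto simp del: diff_less_0_iff_less intro: diff_less_0_iff_less[THEN iffD1])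
qed

lemma diag_lex_less_mult_right:
  fixes B X Y :: "'a::{linordered_ring_strict,ring_1} mat"
  assumes B: "B \<in> ut_mats I" and X: "X \<in> ut_mats I" and Y: "Y \<in> ut_mats I"
    and less: "diag_lex_less X Y"
  shows "diag_lex_less (mat_mult I X B) (mat_mult I Y B)"
proof (rule diag_lex_less_transfer[OF X Y mat_mult_closed[OF X B] mat_mult_closed[OF Y B] less])
  fix i j assume j: "j \<in> I"
    and agree: "\<And>q. q < (j - i, i) \<Longrightarrow> by_diagonals X q = by_diagonals Y q"
  have "X i l = Y i l" if "i \<le> l" "l < j" for l
    using agree[of "(l - i, i)"] that by (simp add: by_diagonals_def)
  then have diff: "mat_mult I X B i j - mat_mult I Y B i j = (X i j - Y i j) * B j j"
    using mat_mult_right_diff[OF B X Y] by blast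
  have "X i j < Y i j \<Longrightarrow> (X i j - Y i j) * B j j < 0"
    using ut_mats_diag_pos[OF B j] by (simp add: mult_neg_pos)
  then show "(X i j = Y i j \<longrightarrow> mat_mult I X B i j = mat_mult I Y B i j)
      \<and> (X i j < Y i j \<longrightarrow> mat_mult I X B i j < mat_mult I Y B i j)"
    using diff by (auto simp del: diff_less_0_iff_less intro: diff_less_0_iff_less[THEN iffD1])
qed

lemma orderable_ut_group: "orderable_group (ut_group I :: 'a::{linordered_ring_strict,ring_1} mat monoid)"
  unfolding orderable_group_def
proof (intro exI[of _ "\<lambda>X Y. diag_lex_less Y X"] conjI ballI impI)
  fix X Y assume "X \<in> carrier (ut_group I :: 'a mat monoid)" "Y \<in> carrier (ut_group I :: 'a mat monoid)"
  then have "X \<in> ut_mats I" "Y \<in> ut_mats I" by (auto simp: ut_group_def)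
  then show "diag_lex_less Y X \<or> diag_lex_less X Y \<or> X = Y"
    using less_fun_trichotomy_wellorder by (metis by_diagonals_inj_ut diag_lex_less_def)
  show "\<not> (diag_lex_less Y X \<and> diag_lex_less X Y)"
    "\<not> (diag_lex_less Y X \<and> X = Y)" "\<not> (diag_lex_less X Y \<and> X = Y)"
    by (auto simp: diag_lex_less_def less_fun_irrefl dest: less_fun_asym)
next
  fix X Y Z :: "'a mat" assume "diag_lex_less Y X \<and> diag_lex_less Z Y"
  then show "diag_lex_less Z X" by (auto simp: diag_lex_less_def intro: less_fun_trans)
next
  fix A B X Y :: "'a mat"
  assume "A \<in> carrier (ut_group I)" "B \<in> carrier (ut_group I)"
    "X \<in> carrier (ut_group I)" "Y \<in> carrier (ut_group I)" "diag_lex_less Y X"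
  then show "diag_lex_less (A \<otimes>\<^bsub>ut_group I\<^esub> Y \<otimes>\<^bsub>ut_group I\<^esub> B) (A \<otimes>\<^bsub>ut_group I\<^esub> X \<otimes>\<^bsub>ut_group I\<^esub> B)"
    by (simp add: ut_group_def diag_lex_less_mult_left diag_lex_less_mult_right mat_mult_closed)
qed

theorem lemma2:
  fixes I :: "nat set" and n :: nat
  assumes "I = {1..n} \<or> I = {1..}"
  shows "group (ut_group I :: (nat \<Rightarrow> nat \<Rightarrow> 'a::{linordered_ring_strict,ring_1}) monoid)
         \<and> orderable_group (ut_group I :: (nat \<Rightarrow> nat \<Rightarrow> 'a) monoid)"
  using group_ut_group orderable_ut_group by blast

end
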